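(* Let $\tilde q=q^2$ and $|q|<1$. For every integer $v\geq 1$, \[ \sum_{n_1,\ldots,n_v\geq 0} \frac{\tilde q^{\sum_{i=1}^v N_i^2}}{(\tilde q)_{n_1}\cdots(\tilde q)_{n_{v-1}}(\tilde q)_{2n_v}}\cdot\frac{(q^3;q^6)_{n_v}}{(q;q^2)_{n_v}} =\frac{Q(q^{12v+6},q^{2v+1})}{(\tilde q)_\infty}, \] where $N_i=n_i+n_{i+1}+\cdots+n_v$ for $i=1,\ldots,v$ (for $v=1$ the product $(\tilde q)_{n_1}\cdots(\tilde q)_{n_{v-1}}$ is empty).
   Context: For a variable $a$ and integer $n\ge 0$, $(a;q)_n=(1-a)(1-aq)\cdots(1-aq^{n-1})$, $(\tilde q)_n=(\tilde q;\tilde q)_n$, $(a;q)_\infty=\lim_{n\to\infty}(a;q)_n$, and $(a_1,\ldots,a_k;q)_n=(a_1;q)_n\cdots(a_k;q)_n$ (also for $n=\infty$). For $|p|<1$ and $z\neq 0$, $Q(p,z):=(p,-z,-p/z;p)_\infty\,(p/z^2,\,z^2p;p^2)_\infty$. *)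

theory Defs
  imports "HOL-Analysis.Analysis"
begin

definition qpoch :: "complex \<Rightarrow> complex \<Rightarrow> nat \<Rightarrow> complex" where
  "qpoch a q n = (\<Prod>k<n. 1 - a * q ^ k)"

definition qpoch_inf :: "complex \<Rightarrow> complex \<Rightarrow> complex" where
  "qpoch_inf a q = lim (\<lambda>n. qpoch a q n)"

definition Qfun :: "complex \<Rightarrow> complex \<Rightarrow> complex" where
  "Qfun p z = qpoch_inf p p * qpoch_inf (- z) p * qpoch_inf (- p / z) p
              * qpoch_inf (p / z^2) (p^2) * qpoch_inf (z^2 * p) (p^2)"

end

theory Submission
  imports Defs
begin

text \<open>Write Q = q^2 and \<omega> = exp(i\<pi>/3). The seed is the finite identity
  \<beta>_n := \<Sum>_{|j|\<le>n} x^(j^2) \<omega>^j / ((x^2;x^2)_(n-j) (x^2;x^2)_(n+j)) = (x^3;x^6)_n / ((x^2;x^2)_(2n) (x;x^2)_n),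
  which is the q-binomial theorem for \<Prod>_{i<2n} (x^(2n-1) + \<omega> x^(2i)); in Bailey's terms,
  \<alpha>_j = x^(j^2) \<omega>^j (j \<in> \<int>) and \<beta> form a Bailey pair. For x = q the case v = 1 of the theorem
  reads \<Sum>_m Q^(m^2) \<beta>_m. In general, grouping the v-fold sum by N_1 and summing out n_1, n_2, \<dots>
  one at a time is Bailey's lemma with both parameters at infinity, each step replacing x by Q x.
  A last step, in the limit n \<rightarrow> \<infinity> (Tannery's theorem), leaves \<Sum>_{j\<in>\<int>} x^(j^2) \<omega>^j / (Q;Q)_\<infinity>
  with x = q^(2v+1), and the same limit of the seed identity evaluates this theta series as
  (x^2;x^2)_\<infinity> (x^3;x^6)_\<infinity> / (x;x^2)_\<infinity> = Q(x^6, x).\<close>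

section \<open>q-Pochhammer symbols\<close>

lemma qpoch_0 [simp]: "qpoch a X 0 = 1"
  by (simp add: qpoch_def)

lemma qpoch_zero_left [simp]: "qpoch 0 X n = 1"
  by (simp add: qpoch_def)

lemma qpoch_Suc: "qpoch a X (Suc n) = qpoch a X n * (1 - a * X ^ n)"
  by (simp add: qpoch_def)

lemma qpoch_Suc_shift: "qpoch a X (Suc n) = (1 - a) * qpoch (a * X) X n"
  by (induction n) (simp_all add: qpoch_Suc mult_ac)

lemma qpoch_add: "qpoch a X (m + n) = qpoch a X m * qpoch (a * X ^ m) X n"
  by (induction n) (simp_all add: qpoch_Suc power_add mult_ac)

lemma qpoch_mult_eq_prod: "qpoch a X (k * n) = (\<Prod>r<k. qpoch (a * X ^ r) (X ^ k) n)"
proof (induction n)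
  case (Suc n)
  have "qpoch a X (k * Suc n) = qpoch a X (k * n) * qpoch (a * X ^ (k * n)) X k"
    by (metis mult_Suc_right add.commute qpoch_add)
  also have "qpoch (a * X ^ (k * n)) X k = (\<Prod>r<k. 1 - a * X ^ r * (X ^ k) ^ n)"
    by (simp add: qpoch_def power_add power_mult mult_ac)
  finally show ?case
    using Suc by (simp add: qpoch_Suc prod.distrib)
qed simp

lemma qpoch_times_qpoch_minus: "qpoch a X n * qpoch (- a) X n = qpoch (a\<^sup>2) (X\<^sup>2) n"
  by (induction n) (simp_all add: qpoch_Suc algebra_simps power2_eq_square)

lemma qpoch_times_cube_factors:
  "qpoch a X n * (\<Prod>i<n. 1 + a * X ^ i + (a * X ^ i)\<^sup>2) = qpoch (a ^ 3) (X ^ 3) n"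
proof -
  have "(1 - y) * (1 + y + y\<^sup>2) = 1 - y ^ 3" for y :: complex
    by (simp add: algebra_simps power2_eq_square power3_eq_cube)
  from this [of "a * X ^ _"] show ?thesis
    by (simp add: qpoch_def prod.distrib [symmetric] power_mult_distrib flip: power_mult)
       (simp add: mult.commute)
qed

lemma mult_power_neq_1:
  fixes a X :: complex
  assumes "norm a < 1" "norm X \<le> 1"
  shows "a * X ^ k \<noteq> 1"
proof
  assume "a * X ^ k = 1"
  moreover have "norm a * norm X ^ k < 1"
    using assms by (meson le_less_trans mult_left_le norm_ge_zero power_le_one)
  ultimately show False
    by (metis norm_mult norm_one norm_power order.irrefl)
qed

lemma qpoch_nonzero:
  assumes "norm a < 1" "norm X \<le> 1"
  shows "qpoch a X n \<noteq> 0"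
  using mult_power_neq_1 [OF assms] by (simp add: qpoch_def)

lemma convergent_prod_qpoch:
  fixes a X :: complex
  assumes "norm X < 1"
  shows "convergent_prod (\<lambda>k. 1 - a * X ^ k)"
proof -
  have "summable (\<lambda>k. norm (a * X ^ k))"
    using assms by (simp add: norm_mult norm_power summable_mult summable_geometric)
  then show ?thesis
    by (intro abs_convergent_prod_imp_convergent_prod summable_imp_abs_convergent_prod) simp
qed

lemma qpoch_inf_eq_prodinf:
  assumes "norm X < 1"
  shows "qpoch_inf a X = (\<Prod>k. 1 - a * X ^ k)"
    and "(\<lambda>n. qpoch a X n) \<longlonglongrightarrow> (\<Prod>k. 1 - a * X ^ k)"
proof -
  have "(\<lambda>n. qpoch a X (Suc n)) \<longlonglongrightarrow> (\<Prod>k. 1 - a * X ^ k)"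
    using convergent_prod_LIMSEQ [OF convergent_prod_qpoch [OF assms]]
    by (simp add: qpoch_def lessThan_Suc_atMost)
  then show "(\<lambda>n. qpoch a X n) \<longlonglongrightarrow> (\<Prod>k. 1 - a * X ^ k)"
    by (rule LIMSEQ_imp_Suc)
  then show "qpoch_inf a X = (\<Prod>k. 1 - a * X ^ k)"
    unfolding qpoch_inf_def by (rule limI)
qed

lemma qpoch_LIMSEQ:
  assumes "norm X < 1"
  shows "(\<lambda>n. qpoch a X n) \<longlonglongrightarrow> qpoch_inf a X"
  using qpoch_inf_eq_prodinf [OF assms] by simp

lemma qpoch_LIMSEQ_mult:
  assumes "norm X < 1" "0 < k"
  shows "(\<lambda>n. qpoch a X (k * n)) \<longlonglongrightarrow> qpoch_inf a X"
proof -
  have "strict_mono (\<lambda>n::nat. k * n)"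
    using assms(2) by (simp add: strict_mono_def)
  from LIMSEQ_subseq_LIMSEQ [OF qpoch_LIMSEQ [OF assms(1)] this] show ?thesis
    by (simp add: o_def)
qed

lemma qpoch_inf_nonzero:
  assumes "norm X < 1" "norm a < 1"
  shows "qpoch_inf a X \<noteq> 0"
  using prodinf_nonzero [OF convergent_prod_qpoch [OF assms(1)]] mult_power_neq_1 [of a X] assms
  by (simp add: qpoch_inf_eq_prodinf(1) [OF assms(1)])

lemma Bseq_qpoch:
  assumes "norm X < 1"
  shows "Bseq (\<lambda>n. qpoch a X n)"
  using qpoch_LIMSEQ [OF assms] by (blast intro: convergent_imp_Bseq convergentI)

lemma Bseq_inverse_qpoch:
  assumes "norm X < 1" "norm a < 1"
  shows "Bseq (\<lambda>n. 1 / qpoch a X n)"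
  using tendsto_divide [OF tendsto_const qpoch_LIMSEQ [OF assms(1)] qpoch_inf_nonzero [OF assms]]
  by (blast intro: convergent_imp_Bseq convergentI)

section \<open>The q-binomial theorem\<close>

definition qbinomial :: "complex \<Rightarrow> nat \<Rightarrow> nat \<Rightarrow> complex" where
  "qbinomial X n k = (if k \<le> n then qpoch X X n / (qpoch X X k * qpoch X X (n - k)) else 0)"

lemma qbinomial_0 [simp]: "(\<And>k. qpoch X X k \<noteq> 0) \<Longrightarrow> qbinomial X n 0 = 1"
  by (simp add: qbinomial_def)

lemma qbinomial_self [simp]: "(\<And>k. qpoch X X k \<noteq> 0) \<Longrightarrow> qbinomial X n n = 1"
  by (simp add: qbinomial_def)

lemma qbinomial_eq_0 [simp]: "n < k \<Longrightarrow> qbinomial X n k = 0"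
  by (simp add: qbinomial_def)

lemma qbinomial_Suc_Suc:
  assumes nz: "\<And>k. qpoch X X k \<noteq> 0" and "k \<le> m"
  shows "qbinomial X (Suc m) (Suc k) = qbinomial X m (Suc k) + X ^ (m - k) * qbinomial X m k"
    and "qbinomial X (Suc m) (Suc k) = qbinomial X m k + X ^ Suc k * qbinomial X m (Suc k)"
proof -
  have "qbinomial X (Suc m) (Suc k) = qbinomial X m (Suc k) + X ^ (m - k) * qbinomial X m k
      \<and> qbinomial X (Suc m) (Suc k) = qbinomial X m k + X ^ Suc k * qbinomial X m (Suc k)"
  proof (cases "k = m")
    case False
    then obtain d where m: "m = k + Suc d"
      using \<open>k \<le> m\<close> less_imp_Suc_add [of k m] by auto
    define A D M where "A = qpoch X X k" and "D = qpoch X X d" and "M = qpoch X X m"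
    define u w where "u = X ^ Suc k" and "w = X ^ Suc d"
    have nonzero: "A * (1 - u) * (D * (1 - w)) \<noteq> 0" "A * (1 - u) * D \<noteq> 0" "A * (D * (1 - w)) \<noteq> 0"
      using nz [of k] nz [of d] nz [of "Suc k"] nz [of "Suc d"]
      by (auto simp: A_def D_def u_def w_def qpoch_Suc)
    have "qpoch X X (Suc k) = A * (1 - u)" "qpoch X X (Suc d) = D * (1 - w)"
      "qpoch X X (Suc m) = M * (1 - u * w)"
      using m by (simp_all add: A_def D_def M_def u_def w_def qpoch_Suc flip: power_add)
    then have "qbinomial X (Suc m) (Suc k) = M * (1 - u * w) / (A * (1 - u) * (D * (1 - w)))"
      and "qbinomial X m (Suc k) = M / (A * (1 - u) * D)"
      and "qbinomial X m k = M / (A * (D * (1 - w)))"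
      unfolding qbinomial_def using m by (simp_all add: D_def M_def A_def)
    moreover have "M * (1 - u * w) / (A * (1 - u) * (D * (1 - w))) = M / (A * (1 - u) * D) + w * (M / (A * (D * (1 - w))))"
      using nonzero by (simp add: divide_simps) (simp add: algebra_simps)
    moreover have "M * (1 - u * w) / (A * (1 - u) * (D * (1 - w))) = M / (A * (D * (1 - w))) + u * (M / (A * (1 - u) * D))"
      using nonzero by (simp add: divide_simps) (simp add: algebra_simps)
    ultimately show ?thesis
      using m by (simp add: u_def w_def)
  qed (use nz in simp)
  then show "qbinomial X (Suc m) (Suc k) = qbinomial X m (Suc k) + X ^ (m - k) * qbinomial X m k"
    and "qbinomial X (Suc m) (Suc k) = qbinomial X m k + X ^ Suc k * qbinomial X m (Suc k)"
    by auto
qed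

theorem qbinomial_theorem:
  assumes nz: "\<And>k. qpoch (x\<^sup>2) (x\<^sup>2) k \<noteq> 0"
  shows "(\<Prod>i<m. w + y * x ^ (2 * i))
           = (\<Sum>k\<le>m. qbinomial (x\<^sup>2) m k * x ^ (k * (k - 1)) * y ^ k * w ^ (m - k))"
proof (induction m)
  case (Suc m)
  define T where "T m k = qbinomial (x\<^sup>2) m k * x ^ (k * (k - 1)) * y ^ k * w ^ (m - k)" for m k
  have T_Suc_0: "T (Suc m) 0 = w * T m 0"
    using nz by (simp add: T_def)
  have T_Suc_Suc: "T (Suc m) (Suc k) = w * T m (Suc k) + y * x ^ (2 * m) * T m k" if "k \<le> m" for k
  proof -
    let ?b = "qbinomial (x\<^sup>2) m"
    have "2 * (m - k) + Suc k * k = 2 * m + k * (k - 1)"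
      using that by (cases k) (simp_all add: algebra_simps)
    then have x_power: "(x\<^sup>2) ^ (m - k) * x ^ (Suc k * k) = x ^ (2 * m) * x ^ (k * (k - 1))"
      by (metis power_add power_mult)
    have w_power: "?b (Suc k) * w ^ (m - k) = w * (?b (Suc k) * w ^ (m - Suc k))"
    proof (cases "k = m")
      case False
      then have "m - k = Suc (m - Suc k)"
        using that by simp
      then show ?thesis
        by simp
    qed simp
    have "T (Suc m) (Suc k) = (?b (Suc k) * w ^ (m - k)) * (x ^ (Suc k * k) * y ^ Suc k)
        + ((x\<^sup>2) ^ (m - k) * x ^ (Suc k * k)) * (?b k * y ^ Suc k * w ^ (m - k))"
      by (simp add: T_def qbinomial_Suc_Suc(1) [OF nz that] algebra_simps)
    also have "\<dots> = w * (?b (Suc k) * w ^ (m - Suc k)) * (x ^ (Suc k * k) * y ^ Suc k)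
        + (x ^ (2 * m) * x ^ (k * (k - 1))) * (?b k * y ^ Suc k * w ^ (m - k))"
      by (simp only: x_power w_power)
    also have "\<dots> = w * T m (Suc k) + y * x ^ (2 * m) * T m k"
      by (simp add: T_def algebra_simps)
    finally show ?thesis .
  qed
  have "(\<Sum>k\<le>Suc m. T (Suc m) k) = T (Suc m) 0 + (\<Sum>k\<le>m. T (Suc m) (Suc k))"
    by (rule sum.atMost_Suc_shift)
  also have "\<dots> = w * (T m 0 + (\<Sum>k\<le>m. T m (Suc k))) + y * x ^ (2 * m) * (\<Sum>k\<le>m. T m k)"
    by (simp add: T_Suc_0 T_Suc_Suc sum.distrib sum_distrib_left sum_distrib_right algebra_simps)
  also have "T m 0 + (\<Sum>k\<le>m. T m (Suc k)) = (\<Sum>k\<le>Suc m. T m k)"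
    by (rule sum.atMost_Suc_shift [symmetric])
  also have "\<dots> = (\<Sum>k\<le>m. T m k)"
    by (simp add: T_def)
  finally show ?case
    using Suc.IH by (simp add: T_def algebra_simps)
qed (use nz in simp)

section \<open>Bailey's lemma\<close>

lemma sum_qbinomial_Suc:
  assumes nz: "\<And>k. qpoch Q Q k \<noteq> 0"
  shows "(\<Sum>i\<le>Suc N. qbinomial Q (Suc N) i * F i)
           = (\<Sum>i\<le>N. Q ^ i * qbinomial Q N i * F i + qbinomial Q N i * F (Suc i))"
proof -
  have "(\<Sum>i\<le>Suc N. qbinomial Q (Suc N) i * F i)
      = F 0 + (\<Sum>i\<le>N. (qbinomial Q N i + Q ^ Suc i * qbinomial Q N (Suc i)) * F (Suc i))"
    using nz by (simp add: sum.atMost_Suc_shift qbinomial_Suc_Suc(2) del: sum.atMost_Suc)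
  also have "\<dots> = (F 0 + (\<Sum>i<N. Q ^ Suc i * qbinomial Q N (Suc i) * F (Suc i)))
                  + (\<Sum>i\<le>N. qbinomial Q N i * F (Suc i))"
    by (simp add: sum.distrib algebra_simps lessThan_Suc_atMost [symmetric])
  also have "F 0 + (\<Sum>i<N. Q ^ Suc i * qbinomial Q N (Suc i) * F (Suc i))
           = (\<Sum>i\<le>N. Q ^ i * qbinomial Q N i * F i)"
    using nz by (simp add: sum.atMost_shift)
  finally show ?thesis
    by (simp only: sum.distrib)
qed

text \<open>A q-analogue of \<Sum>_{i\<le>N} binomial N i * a^i (1 - a)^(N-i) = 1.\<close>

lemma qbinomial_weighted_sum_eq_1:
  assumes nz: "\<And>k. qpoch Q Q k \<noteq> 0"
  shows "(\<Sum>i\<le>N. qbinomial Q N i * a ^ i * Q ^ i\<^sup>2 * qpoch (a * Q ^ Suc i) Q (N - i)) = 1"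
proof (induction N arbitrary: a)
  case (Suc N)
  define F where "F i = a ^ i * Q ^ i\<^sup>2 * qpoch (a * Q ^ Suc i) Q (Suc N - i)" for i
  have key: "Q ^ i * qbinomial Q N i * F i + qbinomial Q N i * F (Suc i)
      = qbinomial Q N i * (a * Q) ^ i * Q ^ i\<^sup>2 * qpoch (a * Q * Q ^ Suc i) Q (N - i)"
    if "i \<le> N" for i
  proof -
    define R where "R = qpoch (a * Q ^ Suc (Suc i)) Q (N - i)"
    have "F i = a ^ i * Q ^ i\<^sup>2 * ((1 - a * Q ^ Suc i) * R)"
      using that by (simp add: F_def R_def Suc_diff_le qpoch_Suc_shift mult_ac)
    moreover have "F (Suc i) = a ^ i * Q ^ i\<^sup>2 * (a * Q ^ i * Q ^ Suc i * R)"
    proof -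
      have "(Suc i)\<^sup>2 = i\<^sup>2 + i + Suc i"
        by (simp add: power2_eq_square)
      then show ?thesis
        by (simp add: F_def R_def power_add mult_ac)
    qed
    moreover have "qpoch (a * Q * Q ^ Suc i) Q (N - i) = R"
      by (simp add: R_def mult_ac)
    ultimately show ?thesis
      by (simp only:) (simp add: algebra_simps)
  qed
  have "(\<Sum>i\<le>Suc N. qbinomial Q (Suc N) i * a ^ i * Q ^ i\<^sup>2 * qpoch (a * Q ^ Suc i) Q (Suc N - i))
      = (\<Sum>i\<le>Suc N. qbinomial Q (Suc N) i * F i)"
    by (simp add: F_def mult_ac)
  also have "\<dots> = (\<Sum>i\<le>N. qbinomial Q N i * (a * Q) ^ i * Q ^ i\<^sup>2 * qpoch (a * Q * Q ^ Suc i) Q (N - i))"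
    unfolding sum_qbinomial_Suc [OF nz] by (intro sum.cong refl key) simp
  also have "\<dots> = 1"
    by (rule Suc.IH)
  finally show ?case .
qed (use nz in simp)

lemma bailey_kernel_term:
  assumes nz: "\<And>k. qpoch Q Q k \<noteq> 0" and "i \<le> N"
  shows "Q ^ (j + i)\<^sup>2 / (qpoch Q Q (N - i) * qpoch Q Q i * qpoch Q Q (i + 2 * j))
      = Q ^ j\<^sup>2 / (qpoch Q Q N * qpoch Q Q (N + 2 * j))
        * (qbinomial Q N i * (Q ^ (2 * j)) ^ i * Q ^ i\<^sup>2 * qpoch (Q ^ (2 * j) * Q ^ Suc i) Q (N - i))"
proof -
  define P where "P = qpoch Q Q"
  define R where "R = qpoch (Q ^ (2 * j) * Q ^ Suc i) Q (N - i)"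
  have P_nz: "P k \<noteq> 0" for k
    using nz by (simp add: P_def)
  have split: "P (N + 2 * j) = P (i + 2 * j) * R"
    using qpoch_add [of Q Q "i + 2 * j" "N - i"] \<open>i \<le> N\<close>
    by (simp add: P_def R_def power_add mult_ac add.commute [of N])
  then have "R \<noteq> 0"
    using P_nz [of "N + 2 * j"] by auto
  have "(j + i)\<^sup>2 = j\<^sup>2 + (2 * j) * i + i\<^sup>2"
    by (simp add: power2_eq_square algebra_simps)
  then have power_eq: "Q ^ (j + i)\<^sup>2 = Q ^ j\<^sup>2 * (Q ^ (2 * j)) ^ i * Q ^ i\<^sup>2"
    by (simp only: power_add power_mult)
  have qbinomial_eq: "qbinomial Q N i = P N / (P i * P (N - i))"
    using \<open>i \<le> N\<close> by (simp add: qbinomial_def P_def)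
  have "y * z1 * z2 / (c * d * e) = y / (a * (e * r)) * (a / (d * c) * z1 * z2 * r)"
    if "a \<noteq> 0" "r \<noteq> 0" for a c d e r y z1 z2 :: complex
    using that by (simp add: field_simps)
  then show ?thesis
    unfolding P_def [symmetric] power_eq qbinomial_eq split R_def [symmetric]
    using P_nz \<open>R \<noteq> 0\<close> by blast
qed

lemma sum_bailey_kernel:
  assumes nz: "\<And>k. qpoch Q Q k \<noteq> 0" and "j \<le> n"
  shows "(\<Sum>m=j..n. Q ^ m\<^sup>2 / (qpoch Q Q (n - m) * qpoch Q Q (m - j) * qpoch Q Q (m + j)))
         = Q ^ j\<^sup>2 / (qpoch Q Q (n - j) * qpoch Q Q (n + j))"
proof -
  define P where "P = qpoch Q Q"
  define N where "N = n - j"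
  have n: "n = N + j"
    using \<open>j \<le> n\<close> by (simp add: N_def)
  have "(\<Sum>m=j..n. Q ^ m\<^sup>2 / (P (n - m) * P (m - j) * P (m + j)))
      = (\<Sum>i\<le>N. Q ^ (j + i)\<^sup>2 / (P (N - i) * P i * P (i + 2 * j)))"
  proof -
    have reindex: "j + i + j = i + 2 * j" for i
      by simp
    show ?thesis
      by (subst sum.atLeastAtMost_shift_0 [OF \<open>j \<le> n\<close>]) (simp add: n atLeast0AtMost reindex)
  qed
  also have "\<dots> = Q ^ j\<^sup>2 / (P N * P (N + 2 * j))
        * (\<Sum>i\<le>N. qbinomial Q N i * (Q ^ (2 * j)) ^ i * Q ^ i\<^sup>2 * qpoch (Q ^ (2 * j) * Q ^ Suc i) Q (N - i))"
    unfolding sum_distrib_left P_def by (intro sum.cong refl bailey_kernel_term [OF nz]) simp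
  also have "\<dots> = Q ^ j\<^sup>2 / (P N * P (N + 2 * j))"
    using qbinomial_weighted_sum_eq_1 [OF nz] by simp
  finally show ?thesis
    by (simp add: P_def n mult_2 add.assoc)
qed

text \<open>Bailey's lemma with both parameters sent to infinity, for pairs relative to a = 1 written as
  \<beta>_m = \<Sum>_{j\<le>m} \<alpha>_j / ((Q;Q)_(m-j) (Q;Q)_(m+j)): the transform
  \<beta>_n \<mapsto> \<Sum>_{m\<le>n} Q^(m^2) / (Q;Q)_(n-m) \<beta>_m multiplies \<alpha>_j by Q^(j^2).\<close>

lemma bailey_lemma:
  assumes nz: "\<And>k. qpoch Q Q k \<noteq> 0"
  shows "(\<Sum>m\<le>n. Q ^ m\<^sup>2 / qpoch Q Q (n - m) * (\<Sum>j\<le>m. g j / (qpoch Q Q (m - j) * qpoch Q Q (m + j))))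
       = (\<Sum>j\<le>n. Q ^ j\<^sup>2 * g j / (qpoch Q Q (n - j) * qpoch Q Q (n + j)))"
proof -
  define K where "K m j = Q ^ m\<^sup>2 / (qpoch Q Q (n - m) * qpoch Q Q (m - j) * qpoch Q Q (m + j))" for m j
  have "(\<Sum>m\<le>n. \<Sum>j\<in>{j\<in>{..n}. j \<le> m}. g j * K m j) = (\<Sum>j\<le>n. \<Sum>m\<in>{m\<in>{..n}. j \<le> m}. g j * K m j)"
    by (rule sum.swap_restrict) auto
  moreover have "{j\<in>{..n}. j \<le> m} = {..m}" if "m \<le> n" for m
    using that by auto
  moreover have "{m\<in>{..n}. j \<le> m} = {j..n}" for j
    by auto
  ultimately have swap: "(\<Sum>m\<le>n. \<Sum>j\<le>m. g j * K m j) = (\<Sum>j\<le>n. g j * (\<Sum>m=j..n. K m j))"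
    by (simp add: sum_distrib_left)
  have "(\<Sum>m\<le>n. Q ^ m\<^sup>2 / qpoch Q Q (n - m) * (\<Sum>j\<le>m. g j / (qpoch Q Q (m - j) * qpoch Q Q (m + j))))
      = (\<Sum>m\<le>n. \<Sum>j\<le>m. g j * K m j)"
    by (simp add: K_def sum_distrib_left divide_inverse mult_ac)
  also have "\<dots> = (\<Sum>j\<le>n. g j * (\<Sum>m=j..n. K m j))"
    by (rule swap)
  also have "\<dots> = (\<Sum>j\<le>n. Q ^ j\<^sup>2 * g j / (qpoch Q Q (n - j) * qpoch Q Q (n + j)))"
    by (intro sum.cong refl) (simp add: K_def sum_bailey_kernel [OF nz])
  finally show ?thesis .
qed

section \<open>The seed Bailey pair\<close>

text \<open>\<omega> = exp(i\<pi>/3); since \<omega> (1 - \<omega>) = 1, the number 1 - \<omega> is \<omega>^-1.\<close>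

definition omega :: complex where
  "omega = Complex (1 / 2) (sqrt 3 / 2)"

lemma omega_mult_one_minus_omega: "omega * (1 - omega) = 1"
  by (simp add: omega_def complex_eq_iff algebra_simps power2_eq_square)

lemma omega_power_diff: "j \<le> n \<Longrightarrow> omega ^ (n - j) = omega ^ n * (1 - omega) ^ j"
proof -
  assume "j \<le> n"
  then have "omega ^ n = omega ^ (n - j) * omega ^ j"
    by (simp flip: power_add)
  then show ?thesis
    by (simp add: mult.assoc omega_mult_one_minus_omega flip: power_mult_distrib)
qed

lemma omega_factor_pair: "(1 + (1 - omega) * t) * (1 + omega * t) = 1 + t + t\<^sup>2"
proof -
  have "(1 + (1 - omega) * t) * (1 + omega * t) = 1 + t + (omega * (1 - omega)) * t\<^sup>2"
    by (simp add: algebra_simps power2_eq_square)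
  then show ?thesis
    by (simp add: omega_mult_one_minus_omega)
qed

lemma norm_omega: "norm omega = 1"
  and norm_one_minus_omega: "norm (1 - omega) = 1"
  by (simp_all add: omega_def cmod_def power2_eq_square)

text \<open>For j > 0 this is \<omega>^j + \<omega>^(-j) = 2 cos(\<pi>j/3): the coefficient of x^(j^2) once the bilateral
  sum \<Sum>_{j\<in>\<int>} x^(j^2) \<omega>^j is folded onto j \<ge> 0.\<close>

definition theta_coeff :: "nat \<Rightarrow> complex" where
  "theta_coeff j = (if j = 0 then 1 else omega ^ j + (1 - omega) ^ j)"

lemma norm_theta_coeff_le: "norm (theta_coeff j) \<le> 2"
  using norm_triangle_ineq [of "omega ^ j" "(1 - omega) ^ j"]
  by (simp add: theta_coeff_def norm_power norm_omega norm_one_minus_omega)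

lemma sum_atMost_double_centered:
  fixes h :: "nat \<Rightarrow> 'a :: comm_monoid_add"
  shows "(\<Sum>k\<le>2 * n. h k) = (\<Sum>j\<le>n. if j = 0 then h n else h (n + j) + h (n - j))"
proof -
  have "{..2 * n} = {..<n} \<union> {n..2 * n}" "{..<n} \<inter> {n..2 * n} = {}"
    by auto
  then have "(\<Sum>k\<le>2 * n. h k) = (\<Sum>k<n. h k) + (\<Sum>k=n..2 * n. h k)"
    by (simp add: sum.union_disjoint)
  also have "(\<Sum>k<n. h k) = (\<Sum>j=Suc 0..n. h (n - j))"
    by (simp add: sum.atLeast1_atMost_eq flip: sum.nat_diff_reindex [of h])
  also have "(\<Sum>k=n..2 * n. h k) = h n + (\<Sum>j=Suc 0..n. h (n + j))"
    by (subst sum.atLeastAtMost_shift_0)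
       (simp_all add: atLeast0AtMost mult_2 sum.atLeast1_atMost_eq sum.atMost_shift)
  also have "(\<Sum>j\<le>n. if j = 0 then h n else h (n + j) + h (n - j))
           = h n + (\<Sum>j=Suc 0..n. h (n + j) + h (n - j))"
    by (simp add: sum.atLeast1_atMost_eq sum.atMost_shift)
  ultimately show ?thesis
    by (simp add: sum.distrib ac_simps)
qed

lemma centered_exponent_identities:
  fixes n j :: nat
  assumes "1 \<le> n" "j \<le> n"
  shows "(n + j) * (n + j - 1) + (2 * n - 1) * (n - j) = j\<^sup>2 + (n * (n - 1) + (2 * n - 1) * n)"
    and "(n - j) * (n - j - 1) + (2 * n - 1) * (n + j) = j\<^sup>2 + (n * (n - 1) + (2 * n - 1) * n)"
proof -
  show "(n + j) * (n + j - 1) + (2 * n - 1) * (n - j) = j\<^sup>2 + (n * (n - 1) + (2 * n - 1) * n)"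
    using assms by (intro of_nat_eq_iff [where 'a = int, THEN iffD1])
      (simp, simp add: algebra_simps power2_eq_square)
  show "(n - j) * (n - j - 1) + (2 * n - 1) * (n + j) = j\<^sup>2 + (n * (n - 1) + (2 * n - 1) * n)"
    using assms by (cases "j = n"; intro of_nat_eq_iff [where 'a = int, THEN iffD1];
      simp; simp add: algebra_simps power2_eq_square)
qed

lemma sum_lessThan_double: "(\<Sum>i<n. 2 * i) = n * (n - 1 :: nat)"
  by (induction n) (auto simp: algebra_simps Suc_diff_le)

lemma prod_lessThan_add:
  fixes f :: "nat \<Rightarrow> 'a :: comm_monoid_mult"
  shows "(\<Prod>i<m + n. f i) = (\<Prod>i<m. f i) * (\<Prod>i<n. f (m + i))"
  by (induction n) (simp_all add: mult_ac)

lemma prod_omega_factors_low: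
  fixes x :: complex
  shows "(\<Prod>i<n. x ^ (2 * n - 1) + omega * x ^ (2 * i))
           = omega ^ n * x ^ (n * (n - 1)) * (\<Prod>i<n. 1 + (1 - omega) * x ^ (2 * i + 1))"
proof -
  have "x ^ (2 * n - 1) + omega * x ^ (2 * i) = x ^ (2 * i) * omega * (1 + (1 - omega) * x ^ (2 * (n - Suc i) + 1))"
    if "i < n" for i
  proof -
    have "2 * i + (2 * (n - Suc i) + 1) = 2 * n - 1"
      using that by simp
    then have "x ^ (2 * i) * x ^ (2 * (n - Suc i) + 1) = x ^ (2 * n - 1)"
      by (simp only: flip: power_add)
    moreover have "x ^ (2 * i) * omega * (1 + (1 - omega) * x ^ (2 * (n - Suc i) + 1))
        = omega * x ^ (2 * i) + (omega * (1 - omega)) * (x ^ (2 * i) * x ^ (2 * (n - Suc i) + 1))"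
      by (simp add: algebra_simps)
    ultimately show ?thesis
      by (simp add: omega_mult_one_minus_omega)
  qed
  then have "(\<Prod>i<n. x ^ (2 * n - 1) + omega * x ^ (2 * i))
      = (\<Prod>i<n. x ^ (2 * i)) * omega ^ n * (\<Prod>i<n. 1 + (1 - omega) * x ^ (2 * (n - Suc i) + 1))"
    by (simp add: prod.distrib)
  also have "(\<Prod>i<n. 1 + (1 - omega) * x ^ (2 * (n - Suc i) + 1)) = (\<Prod>i<n. 1 + (1 - omega) * x ^ (2 * i + 1))"
    by (rule prod.nat_diff_reindex)
  also have "(\<Prod>i<n. x ^ (2 * i)) = x ^ (n * (n - 1))"
    by (simp only: power_sum [symmetric] sum_lessThan_double)
  finally show ?thesis
    by (simp only: mult_ac)
qed

lemma prod_omega_factors_high: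
  fixes x :: complex
  assumes "1 \<le> n"
  shows "(\<Prod>i<n. x ^ (2 * n - 1) + omega * x ^ (2 * (n + i)))
           = x ^ ((2 * n - 1) * n) * (\<Prod>i<n. 1 + omega * x ^ (2 * i + 1))"
proof -
  have "x ^ (2 * n - 1) + omega * x ^ (2 * (n + i)) = x ^ (2 * n - 1) * (1 + omega * x ^ (2 * i + 1))" for i
  proof -
    have "2 * (n + i) = (2 * n - 1) + (2 * i + 1)"
      using assms by simp
    then have "x ^ (2 * (n + i)) = x ^ (2 * n - 1) * x ^ (2 * i + 1)"
      by (metis power_add)
    then show ?thesis
      by (simp add: algebra_simps)
  qed
  then show ?thesis
    by (simp add: prod.distrib power_mult)
qed

lemma prod_omega_factors:
  fixes x :: complex
  assumes "1 \<le> n"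
  shows "(\<Prod>i<2 * n. x ^ (2 * n - 1) + omega * x ^ (2 * i))
           = omega ^ n * x ^ (n * (n - 1) + (2 * n - 1) * n)
             * (\<Prod>i<n. 1 + x * (x\<^sup>2) ^ i + (x * (x\<^sup>2) ^ i)\<^sup>2)"
proof -
  have "(\<Prod>i<2 * n. x ^ (2 * n - 1) + omega * x ^ (2 * i))
      = (\<Prod>i<n. x ^ (2 * n - 1) + omega * x ^ (2 * i)) * (\<Prod>i<n. x ^ (2 * n - 1) + omega * x ^ (2 * (n + i)))"
    using prod_lessThan_add [of "\<lambda>i. x ^ (2 * n - 1) + omega * x ^ (2 * i)" n n] by (simp only: mult_2 [of n])
  also have "\<dots> = omega ^ n * x ^ (n * (n - 1)) * (\<Prod>i<n. 1 + (1 - omega) * x ^ (2 * i + 1))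
      * (x ^ ((2 * n - 1) * n) * (\<Prod>i<n. 1 + omega * x ^ (2 * i + 1)))"
    by (simp only: prod_omega_factors_low prod_omega_factors_high [OF assms])
  also have "\<dots> = omega ^ n * x ^ (n * (n - 1) + (2 * n - 1) * n)
      * (\<Prod>i<n. (1 + (1 - omega) * x ^ (2 * i + 1)) * (1 + omega * x ^ (2 * i + 1)))"
    by (simp only: prod.distrib power_add mult_ac)
  also have "(\<Prod>i<n. (1 + (1 - omega) * x ^ (2 * i + 1)) * (1 + omega * x ^ (2 * i + 1)))
      = (\<Prod>i<n. 1 + x * (x\<^sup>2) ^ i + (x * (x\<^sup>2) ^ i)\<^sup>2)"
    unfolding omega_factor_pair by (simp add: power_mult [symmetric] mult.commute)
  finally show ?thesis .
qed

definition bailey_beta :: "complex \<Rightarrow> complex \<Rightarrow> nat \<Rightarrow> complex" where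
  "bailey_beta Q x n = (\<Sum>j\<le>n. x ^ j\<^sup>2 * theta_coeff j / (qpoch Q Q (n - j) * qpoch Q Q (n + j)))"

lemma bailey_beta_step:
  assumes "\<And>k. qpoch Q Q k \<noteq> 0"
  shows "(\<Sum>m\<le>n. Q ^ m\<^sup>2 / qpoch Q Q (n - m) * bailey_beta Q x m) = bailey_beta Q (Q * x) n"
  unfolding bailey_beta_def bailey_lemma [OF assms]
  by (simp add: power_mult_distrib mult.assoc)

lemma sum_qbinomial_omega:
  fixes x :: complex
  assumes "1 \<le> n"
  shows "(\<Sum>k\<le>2 * n. qbinomial (x\<^sup>2) (2 * n) k * x ^ (k * (k - 1)) * omega ^ k * (x ^ (2 * n - 1)) ^ (2 * n - k))
     = qpoch (x\<^sup>2) (x\<^sup>2) (2 * n) * (omega ^ n * x ^ (n * (n - 1) + (2 * n - 1) * n)) * bailey_beta (x\<^sup>2) x n"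
proof -
  define P where "P = qpoch (x\<^sup>2) (x\<^sup>2)"
  define E where "E = n * (n - 1) + (2 * n - 1) * n"
  define h where "h k = qbinomial (x\<^sup>2) (2 * n) k * x ^ (k * (k - 1)) * omega ^ k * (x ^ (2 * n - 1)) ^ (2 * n - k)" for k
  have h_plus: "h (n + j) = P (2 * n) * (omega ^ n * x ^ E) * (x ^ j\<^sup>2 * omega ^ j / (P (n - j) * P (n + j)))"
    if "j \<le> n" for j
  proof -
    have "x ^ ((n + j) * (n + j - 1)) * (x ^ (2 * n - 1)) ^ (2 * n - (n + j)) = x ^ j\<^sup>2 * x ^ E"
      using centered_exponent_identities(1) [OF assms that]
      by (simp add: E_def mult.commute flip: power_mult power_add)
    then show ?thesis
      using that by (simp add: h_def qbinomial_def P_def power_add divide_inverse mult_ac)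
  qed
  have h_minus: "h (n - j) = P (2 * n) * (omega ^ n * x ^ E) * (x ^ j\<^sup>2 * (1 - omega) ^ j / (P (n - j) * P (n + j)))"
    if "j \<le> n" for j
  proof -
    have "x ^ ((n - j) * (n - j - 1)) * (x ^ (2 * n - 1)) ^ (2 * n - (n - j)) = x ^ j\<^sup>2 * x ^ E"
      using centered_exponent_identities(2) [OF assms that] that
      by (simp add: E_def mult.commute flip: power_mult power_add)
    then show ?thesis
      using that by (simp add: h_def qbinomial_def P_def omega_power_diff divide_inverse mult_ac)
  qed
  have "(\<Sum>k\<le>2 * n. h k) = (\<Sum>j\<le>n. if j = 0 then h n else h (n + j) + h (n - j))"
    by (rule sum_atMost_double_centered)
  also have "\<dots> = (\<Sum>j\<le>n. P (2 * n) * (omega ^ n * x ^ E) * (x ^ j\<^sup>2 * theta_coeff j / (P (n - j) * P (n + j))))"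
  proof (intro sum.cong refl)
    fix j
    assume "j \<in> {..n}"
    then show "(if j = 0 then h n else h (n + j) + h (n - j))
        = P (2 * n) * (omega ^ n * x ^ E) * (x ^ j\<^sup>2 * theta_coeff j / (P (n - j) * P (n + j)))"
      using h_plus [of 0] h_plus [of j] h_minus [of j]
      by (simp add: theta_coeff_def ring_distribs add_divide_distrib)
  qed
  finally show ?thesis
    by (simp add: h_def E_def P_def bailey_beta_def sum_distrib_left)
qed

text \<open>In the q-binomial expansion of \<Prod>_{i<2n} (x^(2n-1) + \<omega> x^(2i)) the terms k = n \<plusminus> j pair up into
  \<beta>_n, while the factors pair up via (1 + \<omega>y)(1 + (1 - \<omega>)y) = 1 + y + y^2.\<close>

theorem bailey_beta_seed:
  fixes x :: complex
  assumes x: "norm x < 1"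
  shows "bailey_beta (x\<^sup>2) x n = qpoch (x ^ 3) (x ^ 6) n / (qpoch (x\<^sup>2) (x\<^sup>2) (2 * n) * qpoch x (x\<^sup>2) n)"
proof (cases "x = 0 \<or> n = 0")
  case True
  then show ?thesis
    by (auto simp: bailey_beta_def theta_coeff_def sum.atMost_shift power_0_left)
next
  case False
  then have "x \<noteq> 0" "1 \<le> n"
    by auto
  have norm_x2: "norm (x\<^sup>2) < 1"
    using x by (simp add: norm_power power_less_one_iff)
  define P where "P = qpoch (x\<^sup>2) (x\<^sup>2)"
  define K where "K = omega ^ n * x ^ (n * (n - 1) + (2 * n - 1) * n)"
  define H where "H = (\<Prod>i<n. 1 + x * (x\<^sup>2) ^ i + (x * (x\<^sup>2) ^ i)\<^sup>2)"
  have P_nz: "P k \<noteq> 0" for k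
    unfolding P_def using norm_x2 by (intro qpoch_nonzero) auto
  have "K * H = P (2 * n) * K * bailey_beta (x\<^sup>2) x n"
    using qbinomial_theorem [where x = x and m = "2 * n" and w = "x ^ (2 * n - 1)" and y = omega] P_nz
      prod_omega_factors [OF \<open>1 \<le> n\<close>, of x] sum_qbinomial_omega [OF \<open>1 \<le> n\<close>, of x]
    by (simp add: K_def H_def P_def)
  moreover have "K \<noteq> 0"
    using \<open>x \<noteq> 0\<close> omega_mult_one_minus_omega by (auto simp: K_def)
  ultimately have "H = P (2 * n) * bailey_beta (x\<^sup>2) x n"
    by simp
  moreover have "qpoch x (x\<^sup>2) n * H = qpoch (x ^ 3) (x ^ 6) n"
    using qpoch_times_cube_factors [of x "x\<^sup>2" n] by (simp add: H_def flip: power_mult)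
  moreover have "qpoch x (x\<^sup>2) n \<noteq> 0"
    using x norm_x2 by (intro qpoch_nonzero) auto
  ultimately show ?thesis
    using P_nz by (simp add: P_def field_simps)
qed

section \<open>Passing to the limit\<close>

lemma tendsto_sum_atMost_tannery:
  fixes b :: "nat \<Rightarrow> 'a :: {real_normed_algebra, banach}"
  assumes b: "summable (\<lambda>k. norm (b k))"
    and lim: "\<And>k. (\<lambda>n. c k n) \<longlonglongrightarrow> l k"
    and bound: "\<And>k n. norm (c k n) \<le> B"
  shows "(\<lambda>n. \<Sum>k\<le>n. b k * c k n) \<longlonglongrightarrow> (\<Sum>k. b k * l k)"
proof -
  define a where "a k n = (if k \<le> n then b k * c k n else 0)" for k n
  have "(\<lambda>n. a k n) \<longlonglongrightarrow> b k * l k" for k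
  proof (rule Lim_transform_eventually)
    show "(\<lambda>n. b k * c k n) \<longlonglongrightarrow> b k * l k"
      by (intro tendsto_mult tendsto_const lim)
    show "eventually (\<lambda>n. b k * c k n = a k n) sequentially"
      using eventually_ge_at_top [of k] by eventually_elim (simp add: a_def)
  qed
  moreover have "norm (a k n) \<le> norm (b k) * B" for k n
  proof -
    have "0 \<le> B"
      using bound [of k n] norm_ge_zero order_trans by blast
    then show ?thesis
      using bound [of k n] norm_mult_ineq [of "b k" "c k n"]
      by (auto simp: a_def intro: order_trans [OF _ mult_left_mono])
  qed
  ultimately have "(\<lambda>n. \<Sum>k. a k n) \<longlonglongrightarrow> (\<Sum>k. b k * l k)"
    using tannerys_theorem [of a "\<lambda>k. b k * l k" sequentially "\<lambda>k. norm (b k) * B"]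
      summable_mult2 [OF b] by (auto intro: always_eventually)
  moreover have "(\<Sum>k. a k n) = (\<Sum>k\<le>n. b k * c k n)" for n
    by (subst suminf_finite [of "{..n}"]) (auto simp: a_def)
  ultimately show ?thesis
    by simp
qed

lemma tendsto_sum_div_qpoch:
  fixes b :: "nat \<Rightarrow> complex"
  assumes X: "norm X < 1" and b: "summable (\<lambda>k. norm (b k))"
  shows "(\<lambda>n. \<Sum>k\<le>n. b k / qpoch X X (n - k)) \<longlonglongrightarrow> suminf b / qpoch_inf X X"
proof -
  obtain B where B: "\<And>n. norm (1 / qpoch X X n) \<le> B"
    using Bseq_inverse_qpoch [OF X X] by (auto simp: Bseq_def)
  have "(\<lambda>n. 1 / qpoch X X (n - k)) \<longlonglongrightarrow> 1 / qpoch_inf X X" for k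
    by (intro tendsto_divide tendsto_const filterlim_compose [OF qpoch_LIMSEQ [OF X]]
        filterlim_minus_const_nat_at_top qpoch_inf_nonzero X)
  from tendsto_sum_atMost_tannery [OF b this B] show ?thesis
    using suminf_divide [OF summable_norm_cancel [OF b]] by simp
qed

lemma tendsto_sum_div_qpoch_qpoch:
  fixes b :: "nat \<Rightarrow> complex"
  assumes X: "norm X < 1" and b: "summable (\<lambda>k. norm (b k))"
  shows "(\<lambda>n. \<Sum>k\<le>n. b k / (qpoch X X (n - k) * qpoch X X (n + k)))
           \<longlonglongrightarrow> suminf b / (qpoch_inf X X)\<^sup>2"
proof -
  obtain B where B: "\<And>n. norm (1 / qpoch X X n) \<le> B"
    using Bseq_inverse_qpoch [OF X X] by (auto simp: Bseq_def)
  have bound: "norm (1 / (qpoch X X (n - k) * qpoch X X (n + k))) \<le> B * B" for k n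
    using B [of "n - k"] B [of "n + k"]
    by (simp add: norm_divide norm_mult divide_inverse mult_mono')
  have lim: "(\<lambda>n. 1 / (qpoch X X (n - k) * qpoch X X (n + k))) \<longlonglongrightarrow> 1 / (qpoch_inf X X)\<^sup>2" for k
    unfolding power2_eq_square
    by (intro tendsto_divide tendsto_mult tendsto_const filterlim_compose [OF qpoch_LIMSEQ [OF X]]
        filterlim_minus_const_nat_at_top filterlim_add_const_nat_at_top filterlim_ident
        no_zero_divisors qpoch_inf_nonzero X)
  from tendsto_sum_atMost_tannery [OF b lim bound] show ?thesis
    using suminf_divide [OF summable_norm_cancel [OF b]] by simp
qed

lemma summable_norm_theta_series:
  fixes x :: complex
  assumes "norm x < 1"
  shows "summable (\<lambda>j. norm (x ^ j\<^sup>2 * theta_coeff j))"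
proof (rule summable_comparison_test)
  show "summable (\<lambda>j. 2 * norm x ^ j)"
    using assms by (intro summable_mult summable_geometric) auto
  have "norm x ^ j\<^sup>2 * norm (theta_coeff j) \<le> norm x ^ j * 2" for j
    using assms norm_theta_coeff_le [of j]
    by (intro mult_mono power_decreasing) (auto simp: power2_eq_square)
  then show "\<exists>N. \<forall>j\<ge>N. norm (norm (x ^ j\<^sup>2 * theta_coeff j)) \<le> 2 * norm x ^ j"
    by (simp add: norm_mult norm_power mult.commute)
qed

lemma tendsto_bailey_beta:
  assumes "norm Q < 1" "norm x < 1"
  shows "(\<lambda>n. bailey_beta Q x n) \<longlonglongrightarrow> (\<Sum>j. x ^ j\<^sup>2 * theta_coeff j) / (qpoch_inf Q Q)\<^sup>2"
  unfolding bailey_beta_def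
  by (intro tendsto_sum_div_qpoch_qpoch summable_norm_theta_series assms)

text \<open>The limit n \<rightarrow> \<infinity> of bailey_beta_step, by Tannery's theorem.\<close>

theorem bailey_beta_sums:
  assumes Q: "norm Q < 1" and x: "norm x < 1"
  shows "(\<lambda>m. Q ^ m\<^sup>2 * bailey_beta Q x m) sums ((\<Sum>j. (Q * x) ^ j\<^sup>2 * theta_coeff j) / qpoch_inf Q Q)"
proof -
  have Qx: "norm (Q * x) < 1"
    using mult_strict_mono [OF Q x] by (simp add: norm_mult)
  have nz: "qpoch_inf Q Q \<noteq> 0"
    using Q by (simp add: qpoch_inf_nonzero)
  have "Bseq (bailey_beta Q x)"
    using tendsto_bailey_beta [OF Q x] by (blast intro: convergent_imp_Bseq convergentI)
  then obtain B where B: "\<And>m. norm (bailey_beta Q x m) \<le> B"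
    by (auto simp: Bseq_def)
  have summable: "summable (\<lambda>m. norm (Q ^ m\<^sup>2 * bailey_beta Q x m))"
  proof (rule summable_comparison_test)
    show "summable (\<lambda>m. B * norm Q ^ m)"
      using Q by (intro summable_mult summable_geometric) auto
    have "norm Q ^ m\<^sup>2 * norm (bailey_beta Q x m) \<le> norm Q ^ m * B" for m
      using Q B [of m] by (intro mult_mono power_decreasing) (auto simp: power2_eq_square)
    then show "\<exists>N. \<forall>m\<ge>N. norm (norm (Q ^ m\<^sup>2 * bailey_beta Q x m)) \<le> B * norm Q ^ m"
      by (simp add: norm_mult norm_power mult.commute)
  qed
  have "(\<lambda>n. \<Sum>m\<le>n. Q ^ m\<^sup>2 * bailey_beta Q x m / qpoch Q Q (n - m))
      \<longlonglongrightarrow> (\<Sum>m. Q ^ m\<^sup>2 * bailey_beta Q x m) / qpoch_inf Q Q"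
    by (rule tendsto_sum_div_qpoch [OF Q summable])
  moreover have "(\<lambda>n. \<Sum>m\<le>n. Q ^ m\<^sup>2 * bailey_beta Q x m / qpoch Q Q (n - m)) = bailey_beta Q (Q * x)"
    using bailey_beta_step [of Q] qpoch_nonzero [of Q Q] Q by (auto simp: mult.commute)
  ultimately have "(\<Sum>m. Q ^ m\<^sup>2 * bailey_beta Q x m) / qpoch_inf Q Q
      = (\<Sum>j. (Q * x) ^ j\<^sup>2 * theta_coeff j) / (qpoch_inf Q Q)\<^sup>2"
    using tendsto_bailey_beta [OF Q Qx] by (auto intro: LIMSEQ_unique)
  then have "(\<Sum>m. Q ^ m\<^sup>2 * bailey_beta Q x m) = (\<Sum>j. (Q * x) ^ j\<^sup>2 * theta_coeff j) / qpoch_inf Q Q"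
    using nz by (simp add: field_simps power2_eq_square)
  with summable_sums [OF summable_norm_cancel [OF summable]] show ?thesis
    by simp
qed

theorem theta_series_eq_product:
  fixes x :: complex
  assumes x: "norm x < 1"
  shows "(\<Sum>j. x ^ j\<^sup>2 * theta_coeff j) = qpoch_inf (x\<^sup>2) (x\<^sup>2) * qpoch_inf (x ^ 3) (x ^ 6) / qpoch_inf x (x\<^sup>2)"
proof -
  have norm_x2: "norm (x\<^sup>2) < 1" and norm_x6: "norm (x ^ 6) < 1"
    using x by (simp_all add: norm_power power_less_one_iff)
  have nz: "qpoch_inf (x\<^sup>2) (x\<^sup>2) \<noteq> 0" "qpoch_inf x (x\<^sup>2) \<noteq> 0"
    using x norm_x2 by (simp_all add: qpoch_inf_nonzero)
  have "(\<lambda>n. bailey_beta (x\<^sup>2) x n)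
      \<longlonglongrightarrow> qpoch_inf (x ^ 3) (x ^ 6) / (qpoch_inf (x\<^sup>2) (x\<^sup>2) * qpoch_inf x (x\<^sup>2))"
    unfolding bailey_beta_seed [OF x]
    by (intro tendsto_divide tendsto_mult qpoch_LIMSEQ qpoch_LIMSEQ_mult norm_x2 norm_x6)
       (use nz in auto)
  with tendsto_bailey_beta [OF norm_x2 x]
  have "(\<Sum>j. x ^ j\<^sup>2 * theta_coeff j) / (qpoch_inf (x\<^sup>2) (x\<^sup>2))\<^sup>2
      = qpoch_inf (x ^ 3) (x ^ 6) / (qpoch_inf (x\<^sup>2) (x\<^sup>2) * qpoch_inf x (x\<^sup>2))"
    by (rule LIMSEQ_unique)
  with nz show ?thesis
    by (simp add: field_simps power2_eq_square)
qed

lemma qpoch_dissection_identity: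
  fixes x :: complex
  shows "qpoch x (x\<^sup>2) (3 * n) * qpoch (x ^ 6) (x ^ 6) (2 * n) * qpoch (- x) (x ^ 6) n
          * qpoch (- (x ^ 5)) (x ^ 6) n * qpoch (x ^ 4) (x ^ 12) n * qpoch (x ^ 8) (x ^ 12) n
         = qpoch (x ^ 3) (x ^ 6) n * qpoch (x\<^sup>2) (x\<^sup>2) (6 * n)"
proof -
  have "qpoch x (x\<^sup>2) (3 * n) = qpoch x (x ^ 6) n * qpoch (x ^ 3) (x ^ 6) n * qpoch (x ^ 5) (x ^ 6) n"
    unfolding qpoch_mult_eq_prod by (simp add: eval_nat_numeral mult_ac flip: power_mult power_add)
  moreover have "qpoch (x ^ 6) (x ^ 6) (2 * n) = qpoch (x ^ 6) (x ^ 12) n * qpoch (x ^ 12) (x ^ 12) n"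
    unfolding qpoch_mult_eq_prod by (simp add: eval_nat_numeral mult_ac flip: power_mult power_add)
  moreover have "qpoch (x\<^sup>2) (x\<^sup>2) (6 * n) = qpoch (x\<^sup>2) (x ^ 12) n * qpoch (x ^ 4) (x ^ 12) n
      * qpoch (x ^ 6) (x ^ 12) n * qpoch (x ^ 8) (x ^ 12) n * qpoch (x ^ 10) (x ^ 12) n * qpoch (x ^ 12) (x ^ 12) n"
    unfolding qpoch_mult_eq_prod by (simp add: eval_nat_numeral mult_ac flip: power_mult power_add)
  moreover have "qpoch x (x ^ 6) n * qpoch (- x) (x ^ 6) n = qpoch (x\<^sup>2) (x ^ 12) n"
    using qpoch_times_qpoch_minus [of x "x ^ 6" n] by (simp flip: power_mult)
  moreover have "qpoch (x ^ 5) (x ^ 6) n * qpoch (- (x ^ 5)) (x ^ 6) n = qpoch (x ^ 10) (x ^ 12) n"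
    using qpoch_times_qpoch_minus [of "x ^ 5" "x ^ 6" n] by (simp flip: power_mult)
  ultimately show ?thesis
    by (simp add: mult_ac)
qed

theorem Qfun_eq_theta_product:
  fixes x :: complex
  assumes x: "norm x < 1"
  shows "Qfun (x ^ 6) x = qpoch_inf (x\<^sup>2) (x\<^sup>2) * qpoch_inf (x ^ 3) (x ^ 6) / qpoch_inf x (x\<^sup>2)"
proof -
  have norm_pow: "norm (x ^ k) < 1" if "0 < k" for k
    using x that by (simp add: norm_power power_less_one_iff)
  have "Qfun (x ^ 6) x = qpoch_inf (x ^ 6) (x ^ 6) * qpoch_inf (- x) (x ^ 6) * qpoch_inf (- (x ^ 5)) (x ^ 6)
          * qpoch_inf (x ^ 4) (x ^ 12) * qpoch_inf (x ^ 8) (x ^ 12)"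
  proof -
    have "x ^ 6 / x = x ^ 5" "x ^ 6 / x\<^sup>2 = x ^ 4"
      by (cases "x = 0"; simp add: eval_nat_numeral field_simps)+
    then show ?thesis
      by (simp add: Qfun_def flip: power_mult power_add)
  qed
  moreover have "qpoch_inf x (x\<^sup>2) * qpoch_inf (x ^ 6) (x ^ 6) * qpoch_inf (- x) (x ^ 6)
      * qpoch_inf (- (x ^ 5)) (x ^ 6) * qpoch_inf (x ^ 4) (x ^ 12) * qpoch_inf (x ^ 8) (x ^ 12)
      = qpoch_inf (x ^ 3) (x ^ 6) * qpoch_inf (x\<^sup>2) (x\<^sup>2)"
  proof (rule LIMSEQ_unique)
    show "(\<lambda>n. qpoch x (x\<^sup>2) (3 * n) * qpoch (x ^ 6) (x ^ 6) (2 * n) * qpoch (- x) (x ^ 6) n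
          * qpoch (- (x ^ 5)) (x ^ 6) n * qpoch (x ^ 4) (x ^ 12) n * qpoch (x ^ 8) (x ^ 12) n)
        \<longlonglongrightarrow> qpoch_inf x (x\<^sup>2) * qpoch_inf (x ^ 6) (x ^ 6) * qpoch_inf (- x) (x ^ 6)
          * qpoch_inf (- (x ^ 5)) (x ^ 6) * qpoch_inf (x ^ 4) (x ^ 12) * qpoch_inf (x ^ 8) (x ^ 12)"
      by (intro tendsto_mult qpoch_LIMSEQ qpoch_LIMSEQ_mult norm_pow) auto
    show "(\<lambda>n. qpoch x (x\<^sup>2) (3 * n) * qpoch (x ^ 6) (x ^ 6) (2 * n) * qpoch (- x) (x ^ 6) n
          * qpoch (- (x ^ 5)) (x ^ 6) n * qpoch (x ^ 4) (x ^ 12) n * qpoch (x ^ 8) (x ^ 12) n)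
        \<longlonglongrightarrow> qpoch_inf (x ^ 3) (x ^ 6) * qpoch_inf (x\<^sup>2) (x\<^sup>2)"
      unfolding qpoch_dissection_identity
      by (intro tendsto_mult qpoch_LIMSEQ qpoch_LIMSEQ_mult norm_pow) auto
  qed
  moreover have "qpoch_inf x (x\<^sup>2) \<noteq> 0"
    using x norm_pow [of 2] by (simp add: qpoch_inf_nonzero)
  ultimately show ?thesis
    by (simp add: field_simps)
qed

section \<open>The multisum\<close>

lemma abs_summable_on_fibres:
  fixes f :: "'a \<Rightarrow> 'b :: real_normed_vector" and g :: "'a \<Rightarrow> nat"
  assumes "\<And>m. finite {x\<in>A. g x = m}"
    and bound: "\<And>m. (\<Sum>x | x \<in> A \<and> g x = m. norm (f x)) \<le> c m"
    and "summable c"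
  shows "(\<lambda>x. norm (f x)) summable_on A"
proof (rule nonneg_bdd_above_summable_on)
  have c_nonneg: "0 \<le> c m" for m
    by (rule order_trans [OF sum_nonneg bound]) simp
  show "bdd_above (sum (\<lambda>x. norm (f x)) ` {F. F \<subseteq> A \<and> finite F})"
  proof (rule bdd_aboveI2)
    fix F
    assume F: "F \<in> {F. F \<subseteq> A \<and> finite F}"
    then have "(\<Sum>x\<in>F. norm (f x)) = (\<Sum>m\<in>g ` F. \<Sum>x | x \<in> F \<and> g x = m. norm (f x))"
      by (intro sum.group [symmetric]) auto
    also have "\<dots> \<le> (\<Sum>m\<in>g ` F. c m)"
    proof (rule sum_mono)
      fix m
      have "(\<Sum>x | x \<in> F \<and> g x = m. norm (f x)) \<le> (\<Sum>x | x \<in> A \<and> g x = m. norm (f x))"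
        using F assms(1) [of m] by (intro sum_mono2) auto
      then show "(\<Sum>x | x \<in> F \<and> g x = m. norm (f x)) \<le> c m"
        using bound [of m] by linarith
    qed
    also have "\<dots> \<le> suminf c"
      using F c_nonneg by (intro sum_le_suminf \<open>summable c\<close>) auto
    finally show "(\<Sum>x\<in>F. norm (f x)) \<le> suminf c" .
  qed
qed auto

lemma sums_fibres:
  fixes f :: "'a \<Rightarrow> 'b :: {topological_comm_monoid_add, t3_space}" and g :: "'a \<Rightarrow> nat"
  assumes "(f has_sum S) A" and "\<And>m. finite {x\<in>A. g x = m}"
  shows "(\<lambda>m. \<Sum>x | x \<in> A \<and> g x = m. f x) sums S"
proof -
  have "bij_betw (\<lambda>x. (g x, x)) A (SIGMA m:UNIV. {x\<in>A. g x = m})"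
    by (rule bij_betwI [where g = snd]) auto
  then have "((\<lambda>p. f (snd p)) has_sum S) (SIGMA m:UNIV. {x\<in>A. g x = m})"
    using assms(1) by (simp flip: has_sum_reindex_bij_betw)
  then have "((\<lambda>m. \<Sum>x | x \<in> A \<and> g x = m. f x) has_sum S) UNIV"
    by (rule has_sum_SigmaD) (auto intro: has_sum_finiteI assms(2))
  then show ?thesis
    by (rule has_sum_imp_sums)
qed

lemma summable_poly_times_gauss:
  fixes r C :: real
  assumes "0 \<le> r" "r < 1"
  shows "summable (\<lambda>m::nat. C * real (m + 1) ^ k * r ^ m\<^sup>2)"
proof (rule summable_comparison_test_ev)
  show "summable (\<lambda>m. \<bar>C\<bar> * (1 / 2) ^ m)"
    by (intro summable_mult summable_geometric) auto
  have "(\<lambda>m. 2 ^ k * r ^ m) \<longlonglongrightarrow> 2 ^ k * 0"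
    using assms by (intro tendsto_mult tendsto_const LIMSEQ_power_zero) auto
  then have "eventually (\<lambda>m. 2 ^ k * r ^ m < 1 / 2) sequentially"
    by (rule order_tendstoD(2)) simp
  then show "eventually (\<lambda>m. norm (C * real (m + 1) ^ k * r ^ m\<^sup>2) \<le> \<bar>C\<bar> * (1 / 2) ^ m) sequentially"
  proof eventually_elim
    case (elim m)
    have "real (m + 1) \<le> 2 ^ m"
      using less_exp [of m] by (metis Suc_eq_plus1 Suc_leI of_nat_le_iff of_nat_numeral of_nat_power)
    then have "real (m + 1) ^ k * r ^ m\<^sup>2 \<le> (2 ^ m) ^ k * (r ^ m) ^ m"
      using assms by (intro mult_mono power_mono) (auto simp: power2_eq_square power_mult)
    also have "\<dots> = (2 ^ k * r ^ m) ^ m"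
      by (simp add: power_mult_distrib flip: power_mult mult.commute)
    also have "\<dots> \<le> (1 / 2) ^ m"
      using elim assms by (intro power_mono) auto
    finally show ?case
      using assms by (simp add: abs_mult mult.assoc mult_left_mono)
  qed
qed

definition multisum_term :: "nat \<Rightarrow> complex \<Rightarrow> (nat \<Rightarrow> nat) \<Rightarrow> complex" where
  "multisum_term v q n = (q\<^sup>2) ^ (\<Sum>i=1..v. (\<Sum>j=i..v. n j)\<^sup>2)
     / ((\<Prod>i\<in>{1..<v}. qpoch (q\<^sup>2) (q\<^sup>2) (n i)) * qpoch (q\<^sup>2) (q\<^sup>2) (2 * n v))
     * (qpoch (q ^ 3) (q ^ 6) (n v) / qpoch q (q\<^sup>2) (n v))"

text \<open>An index tuple (n_1, \<dots>, n_v) is encoded as a function nat \<Rightarrow> nat supported in {1..v}.\<close>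

definition tuples :: "nat \<Rightarrow> (nat \<Rightarrow> nat) set" where
  "tuples v = {n. \<forall>i. i \<notin> {1..v} \<longrightarrow> n i = 0}"

definition tuples_with_sum :: "nat \<Rightarrow> nat \<Rightarrow> (nat \<Rightarrow> nat) set" where
  "tuples_with_sum v m = {n \<in> tuples v. (\<Sum>j=1..v. n j) = m}"

definition tuple_cons :: "nat \<Rightarrow> (nat \<Rightarrow> nat) \<Rightarrow> nat \<Rightarrow> nat" where
  "tuple_cons a n = (\<lambda>i. if i = 0 then 0 else if i = 1 then a else n (i - 1))"

definition tuple_tail :: "(nat \<Rightarrow> nat) \<Rightarrow> nat \<Rightarrow> nat" where
  "tuple_tail n = (\<lambda>i. if i = 0 then 0 else n (Suc i))"

lemma tuple_cons_Suc: "tuple_cons a n (Suc i) = (if i = 0 then a else n i)"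
  by (simp add: tuple_cons_def)

lemma sum_atLeast1_atMost_Suc:
  "(\<Sum>j=1..Suc v. f j) = f 1 + (\<Sum>j=1..v. f (Suc j))"
  by (simp add: sum.atLeast_Suc_atMost add.assoc flip: sum.shift_bounds_cl_Suc_ivl)

lemma sum_tuple_cons_Suc: "(\<Sum>j=i..v. tuple_cons a n (Suc j)) = (\<Sum>j=i..v. n j)" if "1 \<le> i"
  using that by (intro sum.cong refl) (auto simp: tuple_cons_Suc)

lemma tuples_with_sum_subset: "tuples_with_sum v m \<subseteq> {n. \<forall>i. (i \<in> {1..v} \<longrightarrow> n i \<in> {..m}) \<and> (i \<notin> {1..v} \<longrightarrow> n i = 0)}"
  unfolding tuples_with_sum_def tuples_def
  using member_le_sum [of _ "{1..v}"] by fastforce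

lemma finite_tuples_with_sum: "finite (tuples_with_sum v m)"
  by (rule finite_subset [OF tuples_with_sum_subset finite_set_of_finite_funs]) auto

lemma card_tuples_with_sum_le: "card (tuples_with_sum v m) \<le> (m + 1) ^ v"
proof -
  have "inj_on (\<lambda>n. restrict n {1..v}) (tuples_with_sum v m)"
  proof (rule inj_onI)
    fix n n'
    assume n: "n \<in> tuples_with_sum v m" and n': "n' \<in> tuples_with_sum v m"
      and eq: "restrict n {1..v} = restrict n' {1..v}"
    have "n i = n' i" for i
    proof (cases "i \<in> {1..v}")
      case True
      then show ?thesis
        using fun_cong [OF eq, of i] by simp
    next
      case False
      then show ?thesis
        using n n' by (simp add: tuples_with_sum_def tuples_def)
    qed
    then show "n = n'" ..
  qed
  moreover have "(\<lambda>n. restrict n {1..v}) ` tuples_with_sum v m \<subseteq> PiE {1..v} (\<lambda>_. {..m})"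
    using tuples_with_sum_subset [of v m] by (auto simp: PiE_def)
  ultimately have "card (tuples_with_sum v m) \<le> card (PiE {1..v} (\<lambda>_. {..m}))"
    by (intro card_inj_on_le) (auto intro: finite_PiE)
  then show ?thesis
    by (simp add: card_PiE)
qed

lemma tuple_cons_in_tuples: "n \<in> tuples v \<Longrightarrow> tuple_cons a n \<in> tuples (Suc v)"
proof (unfold tuples_def, safe)
  fix i
  assume n: "\<forall>i. i \<notin> {1..v} \<longrightarrow> n i = 0" and "i \<notin> {1..Suc v}"
  then have "i = 0 \<or> (i \<noteq> 1 \<and> i - 1 \<notin> {1..v})"
    by auto
  with n show "tuple_cons a n i = 0"
    by (auto simp: tuple_cons_def)
qed

lemma sum_tuples_with_sum_Suc:
  "(\<Sum>n\<in>tuples_with_sum (Suc v) m. f n)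
     = (\<Sum>m'\<le>m. \<Sum>n\<in>tuples_with_sum v m'. f (tuple_cons (m - m') n))"
proof -
  define s where "s n = (\<Sum>j=1..v. n (Suc j))" for n :: "nat \<Rightarrow> nat"
  have sum_Suc: "(\<Sum>j=1..Suc v. n j) = n 1 + s n" for n
    unfolding s_def by (rule sum_atLeast1_atMost_Suc)
  have "(\<Sum>n\<in>tuples_with_sum (Suc v) m. f n)
      = (\<Sum>p\<in>(SIGMA m':{..m}. tuples_with_sum v m'). f (tuple_cons (m - fst p) (snd p)))"
  proof (rule sum.reindex_bij_witness [where j = "\<lambda>n. (s n, tuple_tail n)"
        and i = "\<lambda>p. tuple_cons (m - fst p) (snd p)"])
    fix n
    assume "n \<in> tuples_with_sum (Suc v) m"
    then have "(\<Sum>j=1..Suc v. n j) = m" "n 0 = 0" "\<And>i. Suc v < i \<Longrightarrow> n i = 0"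
      by (auto simp: tuples_with_sum_def tuples_def simp del: sum.cl_ivl_Suc)
    then have n: "n 1 + s n = m" "n 0 = 0" "\<And>i. Suc v < i \<Longrightarrow> n i = 0"
      by (simp_all only: sum_Suc)
    show "tuple_cons (m - fst (s n, tuple_tail n)) (snd (s n, tuple_tail n)) = n"
      using n by (auto simp: tuple_cons_def tuple_tail_def fun_eq_iff split: nat.split)
    then show "f (tuple_cons (m - fst (s n, tuple_tail n)) (snd (s n, tuple_tail n))) = f n"
      by simp
    show "(s n, tuple_tail n) \<in> (SIGMA m':{..m}. tuples_with_sum v m')"
      using n by (auto simp: tuples_with_sum_def tuples_def tuple_tail_def s_def)
  next
    fix p
    assume "p \<in> (SIGMA m':{..m}. tuples_with_sum v m')"
    then obtain m' n where p: "p = (m', n)" "m' \<le> m" "n \<in> tuples v" "(\<Sum>j=1..v. n j) = m'"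
      by (auto simp: tuples_with_sum_def)
    have s_cons: "s (tuple_cons (m - m') n) = m'"
      using p by (simp add: s_def sum_tuple_cons_Suc)
    show "(s (tuple_cons (m - fst p) (snd p)), tuple_tail (tuple_cons (m - fst p) (snd p))) = p"
      using p s_cons by (auto simp: tuples_def tuple_tail_def tuple_cons_def fun_eq_iff)
    have "(\<Sum>j=1..Suc v. tuple_cons (m - m') n j) = m"
      using p(2) by (simp only: sum_Suc s_cons) (simp add: tuple_cons_def)
    then show "tuple_cons (m - fst p) (snd p) \<in> tuples_with_sum (Suc v) m"
      using p tuple_cons_in_tuples by (simp add: tuples_with_sum_def)
  qed
  also have "\<dots> = (\<Sum>m'\<le>m. \<Sum>n\<in>tuples_with_sum v m'. f (tuple_cons (m - m') n))"
    by (subst sum.Sigma) (auto simp: finite_tuples_with_sum case_prod_beta)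
  finally show ?thesis .
qed

lemma multisum_term_tuple_cons:
  assumes "1 \<le> v"
  shows "multisum_term (Suc v) q (tuple_cons a n)
           = (q\<^sup>2) ^ (a + (\<Sum>j=1..v. n j))\<^sup>2 / qpoch (q\<^sup>2) (q\<^sup>2) a * multisum_term v q n"
proof -
  define N where "N = tuple_cons a n"
  define P where "P = qpoch (q\<^sup>2) (q\<^sup>2)"
  have tail_sums: "(\<Sum>j=Suc i..Suc v. N j) = (\<Sum>j=i..v. n j)" if "1 \<le> i" for i
    unfolding N_def sum.shift_bounds_cl_Suc_ivl by (rule sum_tuple_cons_Suc [OF that])
  have "(\<Sum>j=1..Suc v. N j) = a + (\<Sum>j=1..v. n j)"
    by (simp only: sum_atLeast1_atMost_Suc [of N]) (simp add: N_def tuple_cons_Suc sum_tuple_cons_Suc)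
  then have "(\<Sum>i=1..Suc v. (\<Sum>j=i..Suc v. N j)\<^sup>2)
      = (a + (\<Sum>j=1..v. n j))\<^sup>2 + (\<Sum>i=1..v. (\<Sum>j=i..v. n j)\<^sup>2)"
    unfolding sum_atLeast1_atMost_Suc [of "\<lambda>i. (\<Sum>j=i..Suc v. N j)\<^sup>2"]
    by (auto simp: tail_sums simp del: sum.cl_ivl_Suc intro!: sum.cong)
  moreover have "(\<Prod>i\<in>{1..<Suc v}. P (N i)) = P a * (\<Prod>i\<in>{1..<v}. P (n i))"
  proof -
    have "(\<Prod>i\<in>{1..<Suc v}. P (N i)) = P (N 1) * (\<Prod>i\<in>{Suc 1..<Suc v}. P (N i))"
      using assms by (intro prod.atLeast_Suc_lessThan) simp
    also have "(\<Prod>i\<in>{Suc 1..<Suc v}. P (N i)) = (\<Prod>i\<in>{1..<v}. P (n i))"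
      unfolding prod.shift_bounds_Suc_ivl by (intro prod.cong refl) (auto simp: N_def tuple_cons_Suc)
    finally show ?thesis
      by (simp add: N_def tuple_cons_def)
  qed
  moreover have "N (Suc v) = n v"
    using assms by (simp add: N_def tuple_cons_Suc)
  ultimately show ?thesis
    unfolding multisum_term_def N_def [symmetric] P_def [symmetric]
    by (simp add: power_add field_simps)
qed

lemma sum_multisum_term_tuples_with_sum:
  assumes q: "norm q < 1" and "1 \<le> v"
  shows "(\<Sum>n\<in>tuples_with_sum v m. multisum_term v q n) = (q\<^sup>2) ^ m\<^sup>2 * bailey_beta (q\<^sup>2) (q ^ (2 * v - 1)) m"
  using \<open>1 \<le> v\<close>
proof (induction v arbitrary: m rule: nat_induct_at_least)
  case base
  have "tuples_with_sum 1 m = {\<lambda>i. if i = 1 then m else 0}"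
    by (auto simp: tuples_with_sum_def tuples_def fun_eq_iff)
  then show ?case
    by (simp add: multisum_term_def bailey_beta_seed [OF q])
next
  case (Suc v)
  define P where "P = qpoch (q\<^sup>2) (q\<^sup>2)"
  define y where "y = q ^ (2 * v - 1)"
  have P_nz: "P k \<noteq> 0" for k
    unfolding P_def using q by (intro qpoch_nonzero) (auto simp: norm_power power_le_one power_less_one_iff)
  have cons: "multisum_term (Suc v) q (tuple_cons (m - m') n) = (q\<^sup>2) ^ m\<^sup>2 / P (m - m') * multisum_term v q n"
    if "m' \<le> m" "n \<in> tuples_with_sum v m'" for m' n
    using that multisum_term_tuple_cons [OF Suc.hyps, of q "m - m'" n]
    by (simp add: tuples_with_sum_def P_def)
  have "(\<Sum>n\<in>tuples_with_sum (Suc v) m. multisum_term (Suc v) q n)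
      = (\<Sum>m'\<le>m. \<Sum>n\<in>tuples_with_sum v m'. (q\<^sup>2) ^ m\<^sup>2 / P (m - m') * multisum_term v q n)"
    unfolding sum_tuples_with_sum_Suc by (intro sum.cong refl cons) auto
  also have "\<dots> = (\<Sum>m'\<le>m. (q\<^sup>2) ^ m\<^sup>2 / P (m - m') * ((q\<^sup>2) ^ m'\<^sup>2 * bailey_beta (q\<^sup>2) y m'))"
    by (simp only: Suc.IH y_def flip: sum_distrib_left)
  also have "\<dots> = (q\<^sup>2) ^ m\<^sup>2 * (\<Sum>m'\<le>m. (q\<^sup>2) ^ m'\<^sup>2 / P (m - m') * bailey_beta (q\<^sup>2) y m')"
    by (simp add: sum_distrib_left mult_ac)
  also have "\<dots> = (q\<^sup>2) ^ m\<^sup>2 * bailey_beta (q\<^sup>2) (q\<^sup>2 * y) m"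
    unfolding P_def by (simp only: bailey_beta_step [OF P_nz [unfolded P_def]])
  also have "q\<^sup>2 * y = q ^ (2 * Suc v - 1)"
  proof -
    have "2 + (2 * v - 1) = 2 * Suc v - 1"
      using Suc.hyps by simp
    then show ?thesis
      by (metis y_def power_add)
  qed
  finally show ?case .
qed

lemma norm_multisum_term_bound:
  assumes q: "norm q < 1" and "1 \<le> v"
  obtains C where "0 \<le> C"
    and "\<And>n. n \<in> tuples v \<Longrightarrow> norm (multisum_term v q n) \<le> C * norm (q\<^sup>2) ^ (\<Sum>j=1..v. n j)\<^sup>2"
proof -
  have q2: "norm (q\<^sup>2) < 1" and q6: "norm (q ^ 6) < 1"
    using q by (simp_all add: norm_power power_less_one_iff)
  obtain B where B: "0 < B" "\<And>k. norm (1 / qpoch (q\<^sup>2) (q\<^sup>2) k) \<le> B"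
    using Bseq_inverse_qpoch [OF q2 q2] by (auto simp: Bseq_def)
  obtain B1 where B1: "0 < B1" "\<And>k. norm (1 / qpoch q (q\<^sup>2) k) \<le> B1"
    using Bseq_inverse_qpoch [OF q2 q] by (auto simp: Bseq_def)
  obtain B3 where B3: "0 < B3" "\<And>k. norm (qpoch (q ^ 3) (q ^ 6) k) \<le> B3"
    using Bseq_qpoch [OF q6] by (auto simp: Bseq_def)
  have "norm (multisum_term v q n) \<le> (B ^ v * B3 * B1) * norm (q\<^sup>2) ^ (\<Sum>j=1..v. n j)\<^sup>2" for n
  proof -
    define E where "E = (\<Sum>i=1..v. (\<Sum>j=i..v. n j)\<^sup>2)"
    have "(\<Sum>j=1..v. n j)\<^sup>2 \<le> E"
      unfolding E_def using \<open>1 \<le> v\<close> by (intro member_le_sum [of 1 "{1..v}" "\<lambda>i. (\<Sum>j=i..v. n j)\<^sup>2"]) auto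
    then have power_le: "norm (q\<^sup>2) ^ E \<le> norm (q\<^sup>2) ^ (\<Sum>j=1..v. n j)\<^sup>2"
      using q2 by (intro power_decreasing) auto
    have prod_le: "norm (\<Prod>i\<in>{1..<v}. 1 / qpoch (q\<^sup>2) (q\<^sup>2) (n i)) \<le> B ^ (v - 1)"
    proof -
      have "(\<Prod>i\<in>{1..<v}. norm (1 / qpoch (q\<^sup>2) (q\<^sup>2) (n i))) \<le> (\<Prod>i\<in>{1..<v}. B)"
        using B by (intro prod_mono) auto
      then show ?thesis
        by (simp add: prod_norm)
    qed
    have "multisum_term v q n = (q\<^sup>2) ^ E * (\<Prod>i\<in>{1..<v}. 1 / qpoch (q\<^sup>2) (q\<^sup>2) (n i))
        * (1 / qpoch (q\<^sup>2) (q\<^sup>2) (2 * n v)) * qpoch (q ^ 3) (q ^ 6) (n v) * (1 / qpoch q (q\<^sup>2) (n v))"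
      unfolding prod_dividef [of "\<lambda>_. 1", simplified]
      by (simp add: multisum_term_def E_def divide_inverse mult_ac)
    then have "norm (multisum_term v q n) = norm (q\<^sup>2) ^ E * norm (\<Prod>i\<in>{1..<v}. 1 / qpoch (q\<^sup>2) (q\<^sup>2) (n i))
        * norm (1 / qpoch (q\<^sup>2) (q\<^sup>2) (2 * n v)) * norm (qpoch (q ^ 3) (q ^ 6) (n v)) * norm (1 / qpoch q (q\<^sup>2) (n v))"
      by (simp only: norm_mult norm_power)
    also have "\<dots> \<le> norm (q\<^sup>2) ^ (\<Sum>j=1..v. n j)\<^sup>2 * B ^ (v - 1) * B * B3 * B1"
      using B B1 B3 by (intro mult_mono power_le prod_le) auto
    also have "\<dots> = (B ^ v * B3 * B1) * norm (q\<^sup>2) ^ (\<Sum>j=1..v. n j)\<^sup>2"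
      using \<open>1 \<le> v\<close> by (cases v) (simp_all add: mult_ac)
    finally show ?thesis .
  qed
  with B B1 B3 show ?thesis
    by (intro that [of "B ^ v * B3 * B1"]) auto
qed

lemma multisum_term_abs_summable:
  assumes q: "norm q < 1" and "1 \<le> v"
  shows "(\<lambda>n. norm (multisum_term v q n)) summable_on tuples v"
proof -
  obtain C where C: "0 \<le> C"
    "\<And>n. n \<in> tuples v \<Longrightarrow> norm (multisum_term v q n) \<le> C * norm (q\<^sup>2) ^ (\<Sum>j=1..v. n j)\<^sup>2"
    using norm_multisum_term_bound [OF assms] by blast
  show ?thesis
  proof (rule abs_summable_on_fibres [where g = "\<lambda>n. \<Sum>j=1..v. n j"])
    show "finite {n \<in> tuples v. (\<Sum>j=1..v. n j) = m}" for m
      using finite_tuples_with_sum [of v m] by (simp add: tuples_with_sum_def)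
    show "summable (\<lambda>m. C * real (m + 1) ^ v * norm (q\<^sup>2) ^ m\<^sup>2)"
      using q by (intro summable_poly_times_gauss) (auto simp: norm_power power_less_one_iff)
    fix m
    have "(\<Sum>n\<in>tuples_with_sum v m. norm (multisum_term v q n))
        \<le> real (card (tuples_with_sum v m)) * (C * norm (q\<^sup>2) ^ m\<^sup>2)"
      using C(2) by (intro sum_bounded_above) (auto simp: tuples_with_sum_def)
    also have "\<dots> \<le> real ((m + 1) ^ v) * (C * norm (q\<^sup>2) ^ m\<^sup>2)"
      using C(1) card_tuples_with_sum_le [of v m] by (intro mult_right_mono of_nat_mono) auto
    finally show "(\<Sum>n | n \<in> tuples v \<and> (\<Sum>j=1..v. n j) = m. norm (multisum_term v q n))
        \<le> C * real (m + 1) ^ v * norm (q\<^sup>2) ^ m\<^sup>2"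
      by (simp add: tuples_with_sum_def mult_ac)
  qed
qed

lemma multisum_fibres_sums:
  assumes "norm q < 1" and "1 \<le> v"
  shows "(\<lambda>m. \<Sum>n\<in>tuples_with_sum v m. multisum_term v q n)
           sums (Qfun (q ^ (12 * v + 6)) (q ^ (2 * v + 1)) / qpoch_inf (q\<^sup>2) (q\<^sup>2))"
proof -
  define x where "x = q ^ (2 * v + 1)"
  have norm_power_q: "norm (q ^ k) < 1" if "0 < k" for k
    using assms that by (simp add: norm_power power_less_one_iff)
  have q2: "norm (q\<^sup>2) < 1" and qv: "norm (q ^ (2 * v - 1)) < 1" and x: "norm x < 1"
    using assms(2) by (simp_all only: x_def norm_power_q)
  have "2 + (2 * v - 1) = 2 * v + 1" "(2 * v + 1) * 6 = 12 * v + 6"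
    using assms(2) by simp_all
  then have x_eq: "q\<^sup>2 * q ^ (2 * v - 1) = x" and x6: "x ^ 6 = q ^ (12 * v + 6)"
    unfolding x_def by (metis power_add, metis power_mult)
  have "(\<Sum>j. x ^ j\<^sup>2 * theta_coeff j) = Qfun (x ^ 6) x"
    using theta_series_eq_product [OF x] Qfun_eq_theta_product [OF x] by simp
  then have "(\<lambda>m. (q\<^sup>2) ^ m\<^sup>2 * bailey_beta (q\<^sup>2) (q ^ (2 * v - 1)) m)
      sums (Qfun (x ^ 6) x / qpoch_inf (q\<^sup>2) (q\<^sup>2))"
    using bailey_beta_sums [OF q2 qv] unfolding x_eq by simp
  then show ?thesis
    unfolding x6 by (simp only: x_def sum_multisum_term_tuples_with_sum [OF assms])
qed

theorem mainTheorem14: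
  fixes q :: complex and v :: nat
  assumes "norm q < 1" and "v \<ge> 1"
  shows "((\<lambda>n::nat \<Rightarrow> nat.
            (q^2) ^ (\<Sum>i=1..v. (\<Sum>j=i..v. n j)^2)
            / ((\<Prod>i\<in>{1..<v}. qpoch (q^2) (q^2) (n i)) * qpoch (q^2) (q^2) (2 * n v))
            * (qpoch (q^3) (q^6) (n v) / qpoch q (q^2) (n v)))
         has_sum (Qfun (q ^ (12 * v + 6)) (q ^ (2 * v + 1)) / qpoch_inf (q^2) (q^2)))
         {n. \<forall>i. i \<notin> {1..v} \<longrightarrow> n i = 0}"
proof -
  obtain S where S: "(multisum_term v q has_sum S) (tuples v)"
    using abs_summable_summable [OF multisum_term_abs_summable [OF assms]] by (auto simp: summable_on_def)
  have "(\<lambda>m. \<Sum>n\<in>tuples_with_sum v m. multisum_term v q n) sums S"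
    using sums_fibres [OF S, of "\<lambda>n. \<Sum>j=1..v. n j"] finite_tuples_with_sum
    by (simp add: tuples_with_sum_def)
  with multisum_fibres_sums [OF assms]
  have "S = Qfun (q ^ (12 * v + 6)) (q ^ (2 * v + 1)) / qpoch_inf (q\<^sup>2) (q\<^sup>2)"
    by (rule sums_unique2 [symmetric])
  with S show ?thesis
    unfolding multisum_term_def tuples_def by simp
qed

end
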